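(* Let $E\subseteq\mathcal M^d$ be a compact set in the free topology that is closed under finite direct sums. If $U$ is a free neighbourhood of $E$ and $E\subseteq\bigcup_{\alpha\in A}G_{\delta_\alpha}\subseteq U$ for some family $\{\delta_\alpha\}_{\alpha\in A}$ of matrices of free polynomials, then there exist $\delta\in\{\delta_\alpha:\alpha\in A\}$ and a real number $t>1$ such that $E\subseteq G_{t\delta}\subseteq G_\delta\subseteq U$.
   Context: $\mathcal M^d=\bigcup_n\mathcal M_n^d$ ($d$-tuples of $n\times n$ complex matrices). For a matrix $\delta$ of free polynomials in $d$ noncommuting variables, $G_\delta=\{M\in\mathcal M^d:\|\delta(M)\|<1\}$. The free topology on $\mathcal M^d$ is the topology with the sets $G_\delta$ as a basis. Direct sums of $d$-tuples are taken componentwise. *)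

theory Defs
  imports Complex_Main "Jordan_Normal_Form.Matrix"
begin

(* A free (noncommutative) polynomial in d variables: finitely supported
   coefficient function on words (lists of variable indices < d). *)
type_synonym fpoly = "nat list \<Rightarrow> complex"

definition free_poly :: "nat \<Rightarrow> fpoly \<Rightarrow> bool" where
  "free_poly d p \<longleftrightarrow> finite {w. p w \<noteq> 0} \<and> (\<forall>w. p w \<noteq> 0 \<longrightarrow> set w \<subseteq> {..<d})"

definition free_polymat :: "nat \<Rightarrow> fpoly mat \<Rightarrow> bool" where
  "free_polymat d \<delta> \<longleftrightarrow> (\<forall>i<dim_row \<delta>. \<forall>j<dim_col \<delta>. free_poly d (\<delta> $$ (i, j)))"

definition Md :: "nat \<Rightarrow> (nat \<times> complex mat list) set" where
  "Md d = {(n, Xs). n \<ge> 1 \<and> length Xs = d \<and> (\<forall>X\<in>set Xs. X \<in> carrier_mat n n)}"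

definition word_eval :: "nat \<Rightarrow> complex mat list \<Rightarrow> nat list \<Rightarrow> complex mat" where
  "word_eval n Xs w = foldr (\<lambda>i A. Xs ! i * A) w (1\<^sub>m n)"

definition poly_eval :: "fpoly \<Rightarrow> nat \<times> complex mat list \<Rightarrow> complex mat" where
  "poly_eval p M = (case M of (n, Xs) \<Rightarrow>
     mat n n (\<lambda>(i, j). \<Sum>w\<in>{w. p w \<noteq> 0}. p w * word_eval n Xs w $$ (i, j)))"

(* delta(M): the block matrix whose (a,b) block is delta_ab(M). *)
definition polymat_eval :: "fpoly mat \<Rightarrow> nat \<times> complex mat list \<Rightarrow> complex mat" where
  "polymat_eval \<delta> M = (case M of (n, Xs) \<Rightarrow>
     mat (dim_row \<delta> * n) (dim_col \<delta> * n)
       (\<lambda>(i, j). poly_eval (\<delta> $$ (i div n, j div n)) M $$ (i mod n, j mod n)))"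

definition vnorm :: "complex vec \<Rightarrow> real" where
  "vnorm v = sqrt (\<Sum>i<dim_vec v. (cmod (v $ i))\<^sup>2)"

definition opnorm :: "complex mat \<Rightarrow> real" where
  "opnorm A = Sup {vnorm (A *\<^sub>v v) | v. v \<in> carrier_vec (dim_col A) \<and> vnorm v \<le> 1}"

definition G :: "nat \<Rightarrow> fpoly mat \<Rightarrow> (nat \<times> complex mat list) set" where
  "G d \<delta> = {M \<in> Md d. opnorm (polymat_eval \<delta> M) < 1}"

definition scale_polymat :: "real \<Rightarrow> fpoly mat \<Rightarrow> fpoly mat" where
  "scale_polymat t \<delta> = map_mat (\<lambda>p w. complex_of_real t * p w) \<delta>"

definition free_open :: "nat \<Rightarrow> (nat \<times> complex mat list) set \<Rightarrow> bool" where
  "free_open d U \<longleftrightarrow> (\<exists>\<F>. \<F> \<subseteq> {G d \<delta> | \<delta>. free_polymat d \<delta>} \<and> U = \<Union>\<F>)"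

definition free_compact :: "nat \<Rightarrow> (nat \<times> complex mat list) set \<Rightarrow> bool" where
  "free_compact d E \<longleftrightarrow> E \<subseteq> Md d \<and>
     (\<forall>\<U>. (\<forall>U\<in>\<U>. free_open d U) \<and> E \<subseteq> \<Union>\<U> \<longrightarrow>
        (\<exists>\<F>\<subseteq>\<U>. finite \<F> \<and> E \<subseteq> \<Union>\<F>))"

definition dsum :: "nat \<times> complex mat list \<Rightarrow> nat \<times> complex mat list \<Rightarrow> nat \<times> complex mat list" where
  "dsum M N = (case M of (n, Xs) \<Rightarrow> case N of (k, Ys) \<Rightarrow>
     (n + k, map2 (\<lambda>X Y. four_block_mat X (0\<^sub>m n k) (0\<^sub>m k n) Y) Xs Ys))"

definition closed_dsum :: "(nat \<times> complex mat list) set \<Rightarrow> bool" where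
  "closed_dsum E \<longleftrightarrow> (\<forall>M\<in>E. \<forall>N\<in>E. dsum M N \<in> E)"

end

theory Submission
  imports Defs "HOL-Analysis.L2_Norm"
begin

(* Each basic set G_\<delta> is closed under taking direct summands: after reordering indices into
   block form, \<delta>(M) and \<delta>(N) are compressions of \<delta>(M \<oplus> N), and compressions do not
   increase the operator norm. Moreover G_\<delta> is the union of the sets G_{t\<delta>}, t > 1, because
   \<parallel>t\<delta>(M)\<parallel> = t\<parallel>\<delta>(M)\<parallel>. Cover E by the sets G_{t\<delta>_\<alpha>} and pass to a finite subcover. If no
   member contained E, choose for each member a point of E outside it; the direct sum of these
   points lies in E but, by summand-closedness, outside every member. *)

lemma vnorm_L2_set: "vnorm v = L2_set (\<lambda>i. cmod (v $ i)) {..<dim_vec v}"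
  unfolding vnorm_def L2_set_def by simp

lemma vnorm_nonneg: "0 \<le> vnorm v"
  by (simp add: vnorm_L2_set L2_set_nonneg)

lemma cmod_index_le_vnorm: "i < dim_vec v \<Longrightarrow> cmod (v $ i) \<le> vnorm v"
  unfolding vnorm_L2_set by (rule member_le_L2_set) auto

lemma vnorm_smult: "vnorm (c \<cdot>\<^sub>v v) = cmod c * vnorm v"
  by (simp add: vnorm_def norm_mult power_mult_distrib sum_distrib_left[symmetric] real_sqrt_mult)

lemma smult_mult_mat_vec: "dim_vec v = dim_col A \<Longrightarrow> (c \<cdot>\<^sub>m A) *\<^sub>v v = c \<cdot>\<^sub>v (A *\<^sub>v v)"
  by (intro eq_vecI) (simp_all add: scalar_prod_def sum_distrib_left mult.assoc)

lemma bdd_above_opnorm_set: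
  "bdd_above {vnorm (A *\<^sub>v v) | v. v \<in> carrier_vec (dim_col A) \<and> vnorm v \<le> 1}"
proof (rule bdd_aboveI, safe)
  fix v :: "complex vec" assume v: "v \<in> carrier_vec (dim_col A)" "vnorm v \<le> 1"
  have "vnorm (A *\<^sub>v v) \<le> (\<Sum>i<dim_row A. cmod ((A *\<^sub>v v) $ i))"
    unfolding vnorm_L2_set by (rule order.trans[OF L2_set_le_sum]) auto
  also have "\<dots> \<le> (\<Sum>i<dim_row A. \<Sum>j<dim_col A. cmod (A $$ (i, j)))"
  proof (rule sum_mono)
    fix i assume i: "i \<in> {..<dim_row A}"
    have "cmod ((A *\<^sub>v v) $ i) \<le> (\<Sum>j<dim_col A. cmod (A $$ (i, j) * v $ j))"
      using i v(1) by (simp add: scalar_prod_def lessThan_atLeast0 norm_sum)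
    also have "\<dots> \<le> (\<Sum>j<dim_col A. cmod (A $$ (i, j)))"
      using v cmod_index_le_vnorm[of _ v]
      by (intro sum_mono) (force simp: norm_mult intro!: mult_left_le)
    finally show "cmod ((A *\<^sub>v v) $ i) \<le> (\<Sum>j<dim_col A. cmod (A $$ (i, j)))" .
  qed
  finally show "vnorm (A *\<^sub>v v) \<le> (\<Sum>i<dim_row A. \<Sum>j<dim_col A. cmod (A $$ (i, j)))" .
qed

lemma vnorm_mult_mat_vec_le_opnorm:
  "v \<in> carrier_vec (dim_col A) \<Longrightarrow> vnorm v \<le> 1 \<Longrightarrow> vnorm (A *\<^sub>v v) \<le> opnorm A"
  unfolding opnorm_def by (rule cSup_upper[OF _ bdd_above_opnorm_set]) blast

lemma opnorm_le:
  assumes "\<And>v. v \<in> carrier_vec (dim_col A) \<Longrightarrow> vnorm v \<le> 1 \<Longrightarrow> vnorm (A *\<^sub>v v) \<le> c"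
  shows "opnorm A \<le> c"
proof -
  have "vnorm (0\<^sub>v (dim_col A)) \<le> 1"
    by (simp add: vnorm_def)
  then show ?thesis
    unfolding opnorm_def using assms by (intro cSup_least) force+
qed

lemma opnorm_nonneg: "0 \<le> opnorm A"
  using vnorm_mult_mat_vec_le_opnorm[of "0\<^sub>v (dim_col A)" A]
    vnorm_nonneg[of "A *\<^sub>v 0\<^sub>v (dim_col A)"]
  by (simp add: vnorm_def)

lemma opnorm_smult_le: "opnorm (c \<cdot>\<^sub>m A) \<le> cmod c * opnorm A"
  by (rule opnorm_le)
    (simp add: smult_mult_mat_vec vnorm_smult mult_left_mono vnorm_mult_mat_vec_le_opnorm)

lemma opnorm_smult:
  assumes "c \<noteq> 0" shows "opnorm (c \<cdot>\<^sub>m A) = cmod c * opnorm A"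
proof (rule antisym[OF opnorm_smult_le])
  have "A = inverse c \<cdot>\<^sub>m (c \<cdot>\<^sub>m A)"
    using assms by (intro eq_matI) auto
  then have "opnorm A \<le> opnorm (c \<cdot>\<^sub>m A) / cmod c"
    by (metis opnorm_smult_le norm_inverse mult.commute divide_inverse)
  then show "cmod c * opnorm A \<le> opnorm (c \<cdot>\<^sub>m A)"
    using assms by (simp add: field_simps)
qed

lemma sum_extend_by_zero:
  assumes "g ` I \<subseteq> K" "inj_on g I" "finite K" "\<And>k. k \<in> K - g ` I \<Longrightarrow> h k = 0"
  shows "(\<Sum>k\<in>K. h k) = (\<Sum>i\<in>I. h (g i))"
proof -
  have "(\<Sum>k\<in>K. h k) = (\<Sum>k\<in>g ` I. h k)"
    using assms by (intro sum.mono_neutral_right) auto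
  then show ?thesis
    using assms(2) by (simp add: sum.reindex)
qed

lemma opnorm_submatrix_le:
  fixes B C :: "complex mat" and f g :: "nat \<Rightarrow> nat"
  assumes f: "f ` {..<dim_row B} \<subseteq> {..<dim_row C}" "inj_on f {..<dim_row B}"
    and g: "g ` {..<dim_col B} \<subseteq> {..<dim_col C}" "inj_on g {..<dim_col B}"
    and entries: "\<And>i j. i < dim_row B \<Longrightarrow> j < dim_col B \<Longrightarrow> B $$ (i, j) = C $$ (f i, g j)"
  shows "opnorm B \<le> opnorm C"
proof (rule opnorm_le)
  fix v assume v: "v \<in> carrier_vec (dim_col B)" "vnorm v \<le> 1"
  define J where "J = {..<dim_col B}"
  define w where "w = vec (dim_col C) (\<lambda>k. if k \<in> g ` J then v $ the_inv_into J g k else 0)"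
  have w_g: "w $ g j = v $ j" if "j \<in> J" for j
    using that g unfolding w_def J_def by (auto simp: the_inv_into_f_f)
  have w_0: "w $ k = 0" if "k \<in> {..<dim_col C} - g ` J" for k
    using that unfolding w_def by simp
  have w: "w \<in> carrier_vec (dim_col C)"
    unfolding w_def by simp
  have "(\<Sum>k<dim_col C. (cmod (w $ k))\<^sup>2) = (\<Sum>j\<in>J. (cmod (w $ g j))\<^sup>2)"
    using g w_0 unfolding J_def by (intro sum_extend_by_zero) auto
  then have "vnorm w = vnorm v"
    using v(1) w_g w unfolding vnorm_def J_def by simp
  have Cw: "(C *\<^sub>v w) $ f i = (B *\<^sub>v v) $ i" if "i < dim_row B" for i
  proof -
    have "f i < dim_row C"
      using that f(1) by auto
    then have "(C *\<^sub>v w) $ f i = (\<Sum>k<dim_col C. C $$ (f i, k) * w $ k)"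
      using w by (simp add: scalar_prod_def lessThan_atLeast0)
    also have "\<dots> = (\<Sum>j\<in>J. C $$ (f i, g j) * w $ g j)"
      using g w_0 unfolding J_def by (intro sum_extend_by_zero) auto
    also have "\<dots> = (B *\<^sub>v v) $ i"
      using that v(1) w_g entries unfolding J_def by (simp add: scalar_prod_def lessThan_atLeast0)
    finally show ?thesis .
  qed
  have "(\<Sum>i<dim_row B. (cmod ((B *\<^sub>v v) $ i))\<^sup>2) = (\<Sum>k\<in>f ` {..<dim_row B}. (cmod ((C *\<^sub>v w) $ k))\<^sup>2)"
    using f(2) Cw by (simp add: sum.reindex)
  also have "\<dots> \<le> (\<Sum>k<dim_row C. (cmod ((C *\<^sub>v w) $ k))\<^sup>2)"
    using f(1) by (intro sum_mono2) auto
  finally have "vnorm (B *\<^sub>v v) \<le> vnorm (C *\<^sub>v w)"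
    unfolding vnorm_def by simp
  also have "\<dots> \<le> opnorm C"
    using w v(2) \<open>vnorm w = vnorm v\<close> by (intro vnorm_mult_mat_vec_le_opnorm) auto
  finally show "vnorm (B *\<^sub>v v) \<le> opnorm C" .
qed

lemma word_eval_carrier:
  "\<forall>i\<in>set w. Xs ! i \<in> carrier_mat n n \<Longrightarrow> word_eval n Xs w \<in> carrier_mat n n"
  by (induction w) (auto simp: word_eval_def)

lemma word_eval_Cons: "word_eval n Xs (i # w) = Xs ! i * word_eval n Xs w"
  by (simp add: word_eval_def)

lemma dsum_Pair:
  "dsum (n, Xs) (k, Ys) = (n + k, map2 (\<lambda>X Y. four_block_mat X (0\<^sub>m n k) (0\<^sub>m k n) Y) Xs Ys)"
  by (simp add: dsum_def)

lemma word_eval_dsum: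
  assumes "length Ys = length Xs" "set w \<subseteq> {..<length Xs}"
    and "\<forall>X\<in>set Xs. X \<in> carrier_mat n n" "\<forall>Y\<in>set Ys. Y \<in> carrier_mat k k"
  shows "word_eval (n + k) (snd (dsum (n, Xs) (k, Ys))) w
    = four_block_mat (word_eval n Xs w) (0\<^sub>m n k) (0\<^sub>m k n) (word_eval k Ys w)"
  using assms(2)
proof (induction w)
  case Nil
  then show ?case
    by (simp add: word_eval_def)
next
  case (Cons i w)
  have X: "Xs ! i \<in> carrier_mat n n" and Y: "Ys ! i \<in> carrier_mat k k"
    using Cons.prems assms by auto
  have WX: "word_eval n Xs w \<in> carrier_mat n n" and WY: "word_eval k Ys w \<in> carrier_mat k k"
    using Cons.prems assms by (auto intro!: word_eval_carrier)
  have "snd (dsum (n, Xs) (k, Ys)) ! i = four_block_mat (Xs ! i) (0\<^sub>m n k) (0\<^sub>m k n) (Ys ! i)"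
    using Cons.prems assms(1) by (simp add: dsum_Pair)
  then show ?case
    using Cons X Y WX WY
    by (simp add: word_eval_Cons mult_four_block_mat[OF X _ _ Y WX _ _ WY])
qed

lemma poly_eval_Pair:
  "poly_eval p (n, Xs) = mat n n (\<lambda>(i, j). \<Sum>w\<in>{w. p w \<noteq> 0}. p w * word_eval n Xs w $$ (i, j))"
  by (simp add: poly_eval_def)

lemma poly_eval_dsum:
  assumes p: "free_poly d p" and M: "(n, Xs) \<in> Md d" and N: "(k, Ys) \<in> Md d"
  shows "poly_eval p (dsum (n, Xs) (k, Ys))
    = four_block_mat (poly_eval p (n, Xs)) (0\<^sub>m n k) (0\<^sub>m k n) (poly_eval p (k, Ys))"
proof -
  let ?W = "{w. p w \<noteq> 0}"
  define Zs where "Zs = snd (dsum (n, Xs) (k, Ys))"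
  have dsum: "dsum (n, Xs) (k, Ys) = (n + k, Zs)"
    unfolding Zs_def by (simp add: dsum_Pair)
  have lengths: "length Xs = d" "length Ys = d"
    and carriers: "\<forall>X\<in>set Xs. X \<in> carrier_mat n n" "\<forall>Y\<in>set Ys. Y \<in> carrier_mat k k"
    using M N by (auto simp: Md_def)
  have letters: "set w \<subseteq> {..<d}" if "w \<in> ?W" for w
    using p that by (auto simp: free_poly_def)
  have W: "word_eval (n + k) Zs w
      = four_block_mat (word_eval n Xs w) (0\<^sub>m n k) (0\<^sub>m k n) (word_eval k Ys w)"
    and WX: "word_eval n Xs w \<in> carrier_mat n n" and WY: "word_eval k Ys w \<in> carrier_mat k k"
    if "w \<in> ?W" for w
    using letters[OF that] lengths carriers unfolding Zs_def
    by (auto intro!: word_eval_dsum word_eval_carrier)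
  have dims: "dim_row (word_eval n Xs w) = n" "dim_col (word_eval n Xs w) = n"
    "dim_row (word_eval k Ys w) = k" "dim_col (word_eval k Ys w) = k" if "w \<in> ?W" for w
    using WX[OF that] WY[OF that] by auto
  let ?B = "four_block_mat (poly_eval p (n, Xs)) (0\<^sub>m n k) (0\<^sub>m k n) (poly_eval p (k, Ys))"
  show ?thesis
  proof (rule eq_matI)
    fix i j assume "i < dim_row ?B" "j < dim_col ?B"
    then show "poly_eval p (dsum (n, Xs) (k, Ys)) $$ (i, j) = ?B $$ (i, j)"
      by (cases "i < n"; cases "j < n")
        (auto simp: poly_eval_Pair dsum W dims intro!: sum.cong sum.neutral)
  qed (simp_all add: poly_eval_Pair dsum)
qed

lemma polymat_eval_Pair:
  "polymat_eval \<delta> (n, Xs) = mat (dim_row \<delta> * n) (dim_col \<delta> * n)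
     (\<lambda>(i, j). poly_eval (\<delta> $$ (i div n, j div n)) (n, Xs) $$ (i mod n, j mod n))"
  by (simp add: polymat_eval_def)

lemma opnorm_polymat_eval_block_le:
  fixes \<delta> :: "fpoly mat"
  assumes m: "0 < m" and ofs: "ofs + m \<le> N"
    and blocks: "\<And>a b i j. a < dim_row \<delta> \<Longrightarrow> b < dim_col \<delta> \<Longrightarrow> i < m \<Longrightarrow> j < m \<Longrightarrow>
      poly_eval (\<delta> $$ (a, b)) (N, Zs) $$ (ofs + i, ofs + j) = poly_eval (\<delta> $$ (a, b)) (m, Ws) $$ (i, j)"
  shows "opnorm (polymat_eval \<delta> (m, Ws)) \<le> opnorm (polymat_eval \<delta> (N, Zs))"
proof -
  \<comment> \<open>row (column) \<open>x\<close> of the size-\<open>m\<close> evaluation is row (column) \<open>e x\<close> of the size-\<open>N\<close> one\<close>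
  define e where "e x = x div m * N + (ofs + x mod m)" for x
  have ofs_mod: "ofs + x mod m < N" for x
    using m ofs by (meson add_less_mono1 less_le_trans mod_less_divisor nat_add_left_cancel_less)
  have e_div: "e x div N = x div m" and e_mod: "e x mod N = ofs + x mod m" for x
    unfolding e_def using ofs_mod[of x] by simp_all
  have e_inj: "inj_on e X" for X
    by (rule inj_onI) (metis e_div e_mod add_left_cancel div_mult_mod_eq)
  have e_range: "e ` {..<q * m} \<subseteq> {..<q * N}" for q
  proof (rule image_subsetI)
    fix x assume "x \<in> {..<q * m}"
    then have "Suc (x div m) \<le> q"
      by (simp add: less_mult_imp_div_less Suc_leI)
    then have "x div m * N + N \<le> q * N"
      by (metis mult_Suc mult_le_mono1 add.commute)
    then show "e x \<in> {..<q * N}"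
      unfolding e_def using ofs_mod[of x] by simp
  qed
  show ?thesis
  proof (rule opnorm_submatrix_le[where f = e and g = e])
    fix i j
    assume ij: "i < dim_row (polymat_eval \<delta> (m, Ws))" "j < dim_col (polymat_eval \<delta> (m, Ws))"
    then have "i div m < dim_row \<delta>" "j div m < dim_col \<delta>" "e i < dim_row \<delta> * N" "e j < dim_col \<delta> * N"
      using e_range by (auto simp: polymat_eval_Pair less_mult_imp_div_less)
    then show "polymat_eval \<delta> (m, Ws) $$ (i, j) = polymat_eval \<delta> (N, Zs) $$ (e i, e j)"
      using m ij by (simp add: polymat_eval_Pair e_div e_mod blocks)
  qed (use e_range e_inj in \<open>simp_all add: polymat_eval_Pair\<close>)
qed

lemma G_dsum_summands:
  assumes M: "M \<in> Md d" and N: "N \<in> Md d" and \<delta>: "free_polymat d \<delta>"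
    and MN: "dsum M N \<in> G d \<delta>"
  shows "M \<in> G d \<delta>" "N \<in> G d \<delta>"
proof -
  obtain n Xs k Ys where MN_Pair: "M = (n, Xs)" "N = (k, Ys)"
    by (cases M, cases N)
  have "0 < n" "0 < k"
    using M N MN_Pair by (auto simp: Md_def)
  have blocks: "poly_eval (\<delta> $$ (a, b)) (dsum M N)
      = four_block_mat (poly_eval (\<delta> $$ (a, b)) M) (0\<^sub>m n k) (0\<^sub>m k n) (poly_eval (\<delta> $$ (a, b)) N)"
    if "a < dim_row \<delta>" "b < dim_col \<delta>" for a b
    using \<delta> that M N unfolding MN_Pair free_polymat_def by (intro poly_eval_dsum) auto
  have "opnorm (polymat_eval \<delta> M) \<le> opnorm (polymat_eval \<delta> (dsum M N))"
    "opnorm (polymat_eval \<delta> N) \<le> opnorm (polymat_eval \<delta> (dsum M N))"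
    unfolding MN_Pair dsum_Pair
    by (rule opnorm_polymat_eval_block_le[where ofs = 0] opnorm_polymat_eval_block_le[where ofs = n];
        use \<open>0 < n\<close> \<open>0 < k\<close> blocks in \<open>simp add: MN_Pair dsum_Pair poly_eval_Pair\<close>)+
  then show "M \<in> G d \<delta>" "N \<in> G d \<delta>"
    using M N MN by (auto simp: G_def)
qed

(* c \<noteq> 0 is needed because poly_eval sums over the support of the polynomial. *)
lemma poly_eval_scale:
  assumes "c \<noteq> 0"
  shows "poly_eval (\<lambda>w. c * p w) M = c \<cdot>\<^sub>m poly_eval p M"
  using assms by (cases M) (auto intro!: eq_matI simp: poly_eval_def sum_distrib_left mult.assoc)

lemma polymat_eval_scale_polymat:
  assumes "t \<noteq> 0"
  shows "polymat_eval (scale_polymat t \<delta>) M = complex_of_real t \<cdot>\<^sub>m polymat_eval \<delta> M"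
proof (cases M)
  case (Pair n Xs)
  have "i div n < dim_row \<delta>" "j div n < dim_col \<delta>" "i mod n < n" "j mod n < n"
    if "i < dim_row \<delta> * n" "j < dim_col \<delta> * n" for i j
    using that by (auto simp: less_mult_imp_div_less intro!: mod_less_divisor Nat.gr0I)
  then show ?thesis
    using assms unfolding Pair
    by (intro eq_matI) (simp_all add: polymat_eval_Pair scale_polymat_def poly_eval_scale,
      simp add: poly_eval_Pair)
qed

lemma free_polymat_scale_polymat:
  "free_polymat d \<delta> \<Longrightarrow> free_polymat d (scale_polymat t \<delta>)"
  by (auto simp: free_polymat_def free_poly_def scale_polymat_def)

lemma G_scale_polymat_subset:
  assumes "1 \<le> t" shows "G d (scale_polymat t \<delta>) \<subseteq> G d \<delta>"
proof
  fix M assume M: "M \<in> G d (scale_polymat t \<delta>)"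
  have "opnorm (polymat_eval \<delta> M) \<le> t * opnorm (polymat_eval \<delta> M)"
    using mult_right_mono[OF assms opnorm_nonneg] by simp
  also have "\<dots> < 1"
    using M assms by (simp add: G_def polymat_eval_scale_polymat opnorm_smult)
  finally show "M \<in> G d \<delta>"
    using M by (simp add: G_def)
qed

lemma G_scale_polymat_neighbourhood:
  assumes "M \<in> G d \<delta>" shows "\<exists>t>1. M \<in> G d (scale_polymat t \<delta>)"
proof -
  define r where "r = opnorm (polymat_eval \<delta> M)"
  have r: "0 \<le> r" "r < 1"
    using assms opnorm_nonneg unfolding r_def by (auto simp: G_def)
  define t where "t = 2 / (1 + r)"
  have "1 < t" "t * r < 1"
    using r unfolding t_def by (simp_all add: field_simps)
  then have "M \<in> G d (scale_polymat t \<delta>)"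
    using assms by (simp add: G_def polymat_eval_scale_polymat opnorm_smult r_def)
  then show ?thesis
    using \<open>1 < t\<close> by blast
qed

lemma free_open_G: "free_polymat d \<delta> \<Longrightarrow> free_open d (G d \<delta>)"
  unfolding free_open_def by (intro exI[of _ "{G d \<delta>}"]) auto

lemma subset_of_summand_closed_finite_cover:
  fixes plus :: "'a \<Rightarrow> 'a \<Rightarrow> 'a"
  assumes "finite \<F>" "E \<noteq> {}" "E \<subseteq> \<Union>\<F>"
    and closed: "\<And>x y. x \<in> E \<Longrightarrow> y \<in> E \<Longrightarrow> plus x y \<in> E"
    and summands: "\<And>S x y. S \<in> \<F> \<Longrightarrow> x \<in> E \<Longrightarrow> y \<in> E \<Longrightarrow> plus x y \<in> S \<Longrightarrow> x \<in> S \<and> y \<in> S"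
  shows "\<exists>S\<in>\<F>. E \<subseteq> S"
proof (rule ccontr)
  assume "\<not> (\<exists>S\<in>\<F>. E \<subseteq> S)"
  have "\<exists>x\<in>E. \<forall>S\<in>\<F>'. x \<notin> S" if "\<F>' \<subseteq> \<F>" for \<F>'
    using finite_subset[OF that \<open>finite \<F>\<close>] that
  proof (induction \<F>')
    case empty
    then show ?case using \<open>E \<noteq> {}\<close> by blast
  next
    case (insert S \<F>')
    obtain x where "x \<in> E" "\<forall>S\<in>\<F>'. x \<notin> S"
      using insert.IH insert.prems by blast
    moreover obtain y where "y \<in> E" "y \<notin> S"
      using \<open>\<not> (\<exists>S\<in>\<F>. E \<subseteq> S)\<close> insert.prems by blast
    moreover have "plus y x \<notin> S'" if "S' \<in> insert S \<F>'" for S'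
      using summands[of S' y x] that calculation insert.prems by auto
    ultimately show ?case
      using closed by blast
  qed
  then show False
    using \<open>E \<subseteq> \<Union>\<F>\<close> by blast
qed

lemma free_compact_closed_dsum_subset_G:
  assumes compact: "free_compact d E" and closed: "closed_dsum E" and "\<Delta> \<noteq> {}"
    and free: "\<forall>\<delta>\<in>\<Delta>. free_polymat d \<delta>" and cover: "E \<subseteq> (\<Union>\<delta>\<in>\<Delta>. G d \<delta>)"
  shows "\<exists>\<delta>\<in>\<Delta>. E \<subseteq> G d \<delta>"
proof (cases "E = {}")
  case True
  then show ?thesis
    using \<open>\<Delta> \<noteq> {}\<close> by blast
next
  case False
  have E: "E \<subseteq> Md d"
    using compact by (simp add: free_compact_def)
  have "\<forall>S\<in>G d ` \<Delta>. free_open d S"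
    using free by (auto intro: free_open_G)
  then obtain \<F> where \<F>: "\<F> \<subseteq> G d ` \<Delta>" "finite \<F>" "E \<subseteq> \<Union>\<F>"
    using compact cover unfolding free_compact_def by meson
  have "\<exists>S\<in>\<F>. E \<subseteq> S"
  proof (rule subset_of_summand_closed_finite_cover[where plus = dsum])
    fix S M N assume "S \<in> \<F>" "M \<in> E" "N \<in> E" "dsum M N \<in> S"
    moreover obtain \<delta> where "\<delta> \<in> \<Delta>" "S = G d \<delta>"
      using \<open>S \<in> \<F>\<close> \<F>(1) by blast
    ultimately show "M \<in> S \<and> N \<in> S"
      using G_dsum_summands[of M d N \<delta>] E free by auto
  qed (use \<F> False closed in \<open>auto simp: closed_dsum_def\<close>)
  then show ?thesis
    using \<F>(1) by blast
qed

theorem proposition9p2: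
  fixes d :: nat and E U :: "(nat \<times> complex mat list) set"
    and A :: "'a set" and \<delta>s :: "'a \<Rightarrow> fpoly mat"
  assumes "free_compact d E"
    and "closed_dsum E"
    and "free_open d U" and "E \<subseteq> U"
    and "A \<noteq> {}"
    and "\<forall>\<alpha>\<in>A. free_polymat d (\<delta>s \<alpha>)"
    and "E \<subseteq> (\<Union>\<alpha>\<in>A. G d (\<delta>s \<alpha>))"
    and "(\<Union>\<alpha>\<in>A. G d (\<delta>s \<alpha>)) \<subseteq> U"
  shows "\<exists>\<alpha>\<in>A. \<exists>t::real. t > 1 \<and>
           E \<subseteq> G d (scale_polymat t (\<delta>s \<alpha>)) \<and>
           G d (scale_polymat t (\<delta>s \<alpha>)) \<subseteq> G d (\<delta>s \<alpha>) \<and>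
           G d (\<delta>s \<alpha>) \<subseteq> U"
proof -
  let ?\<Delta> = "{scale_polymat t (\<delta>s \<alpha>) | \<alpha> t. \<alpha> \<in> A \<and> t > 1}"
  have "E \<subseteq> (\<Union>\<delta>\<in>?\<Delta>. G d \<delta>)"
  proof
    fix M assume "M \<in> E"
    then obtain \<alpha> where "\<alpha> \<in> A" "M \<in> G d (\<delta>s \<alpha>)"
      using assms(7) by blast
    moreover obtain t where "t > 1" "M \<in> G d (scale_polymat t (\<delta>s \<alpha>))"
      using G_scale_polymat_neighbourhood \<open>M \<in> G d (\<delta>s \<alpha>)\<close> by blast
    ultimately show "M \<in> (\<Union>\<delta>\<in>?\<Delta>. G d \<delta>)"
      by blast
  qed
  moreover have "\<forall>\<delta>\<in>?\<Delta>. free_polymat d \<delta>"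
    using assms(6) by (auto intro: free_polymat_scale_polymat)
  moreover have "?\<Delta> \<noteq> {}"
  proof -
    obtain \<alpha> where "\<alpha> \<in> A"
      using assms(5) by blast
    then have "scale_polymat 2 (\<delta>s \<alpha>) \<in> ?\<Delta>"
      by force
    then show ?thesis
      by blast
  qed
  ultimately obtain \<delta> where "\<delta> \<in> ?\<Delta>" "E \<subseteq> G d \<delta>"
    using free_compact_closed_dsum_subset_G[OF assms(1,2)] by meson
  then obtain \<alpha> t where "\<alpha> \<in> A" "t > 1" "E \<subseteq> G d (scale_polymat t (\<delta>s \<alpha>))"
    by blast
  then show ?thesis
    using G_scale_polymat_subset[of t] assms(8) by (intro bexI[of _ \<alpha>] exI[of _ t]) auto
qed

end
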